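(* Fix $l,r>0$, $0<\alpha<\beta<1$ and diffusion constants $D_1\neq D_2$, and let $\delta=\frac{D_2-D_1}{D_2+D_1}$. For every $Q_0\in\mathbb{R}$ there is a unique $A(Q_0)\in(0,A_M)$ with $G_2(Q_0,A(Q_0),\delta)=0$. Furthermore $\lim_{Q_0\to\pm\infty}A(Q_0)=l$. Let $Q_0^*=Q_0^-$ if $\delta>0$ and $Q_0^*=Q_0^+$ if $\delta<0$, where $Q_0^-<0$ (for $\delta>0$) is the number such that $\partial_{Q_0}A$ has the same sign as $l-r$ for $Q_0>Q_0^-$ and the opposite sign for $Q_0<Q_0^-$, and $Q_0^+>0$ (for $\delta<0$) is the number such that $\partial_{Q_0}A$ has the sign opposite to $l-r$ for $Q_0<Q_0^+$ and the same sign for $Q_0>Q_0^+$. Then for all $Q_0\in\mathbb{R}$: (a) if $l<r$ then $l\le A(Q_0)\le A(Q_0^* )$; (b) if $l>r$ then $A(Q_0^* )\le A(Q_0)\le l$; (c) if $l=r$ then $A(Q_0)=l=r=A(Q_0^* )$.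
   Context: Setting: reduction of the steady zero-current Poisson–Nernst–Planck problem for two ion species with valences $\pm1$; $l,r>0$ are boundary concentrations, the permanent charge is $2Q_0$ on $(a,b)$ and $0$ elsewhere in $(0,1)$, $\alpha=H(a)/H(1)$, $\beta=H(b)/H(1)$ with $H(x)=\int_0^x ds/h(s)$, $h>0$ the cross-sectional area. For $Q_0\in\mathbb{R}$, $A>0$ define $B=\frac{1-\beta}{\alpha}(l-A)+r$, $A_M=l+\frac{\alpha}{1-\beta}r$, $S_a=\sqrt{Q_0^2+A^2}$, $S_b=\sqrt{Q_0^2+B^2}$, $N=A-l+S_a-S_b$, and $G_2(Q_0,A,\delta)=\delta Q_0\ln\frac{S_a+\delta Q_0}{S_b+\delta Q_0}-N$. *)

theory Defs
  imports "HOL-Analysis.Analysis"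
begin

text \<open>Quantities of the zero-current PNP reduction. Parameters: boundary
concentrations l r, alpha = H(a)/H(1), beta = H(b)/H(1), permanent charge
parameter Q0, unknown A, and delta.\<close>

definition Bq :: "real \<Rightarrow> real \<Rightarrow> real \<Rightarrow> real \<Rightarrow> real \<Rightarrow> real" where
  "Bq l r \<alpha> \<beta> A = (1 - \<beta>) / \<alpha> * (l - A) + r"

definition AM :: "real \<Rightarrow> real \<Rightarrow> real \<Rightarrow> real \<Rightarrow> real" where
  "AM l r \<alpha> \<beta> = l + \<alpha> / (1 - \<beta>) * r"

definition Sa :: "real \<Rightarrow> real \<Rightarrow> real" where
  "Sa Q0 A = sqrt (Q0\<^sup>2 + A\<^sup>2)"

definition Sb :: "real \<Rightarrow> real \<Rightarrow> real \<Rightarrow> real \<Rightarrow> real \<Rightarrow> real \<Rightarrow> real" where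
  "Sb l r \<alpha> \<beta> Q0 A = sqrt (Q0\<^sup>2 + (Bq l r \<alpha> \<beta> A)\<^sup>2)"

definition Nq :: "real \<Rightarrow> real \<Rightarrow> real \<Rightarrow> real \<Rightarrow> real \<Rightarrow> real \<Rightarrow> real" where
  "Nq l r \<alpha> \<beta> Q0 A = A - l + Sa Q0 A - Sb l r \<alpha> \<beta> Q0 A"

definition G2 :: "real \<Rightarrow> real \<Rightarrow> real \<Rightarrow> real \<Rightarrow> real \<Rightarrow> real \<Rightarrow> real \<Rightarrow> real" where
  "G2 l r \<alpha> \<beta> Q0 A \<delta> =
     \<delta> * Q0 * ln ((Sa Q0 A + \<delta> * Q0) / (Sb l r \<alpha> \<beta> Q0 A + \<delta> * Q0))
     - Nq l r \<alpha> \<beta> Q0 A"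

text \<open>The root A(Q0) in (0, A_M) (meaningful once uniqueness is known).\<close>
definition Aroot :: "real \<Rightarrow> real \<Rightarrow> real \<Rightarrow> real \<Rightarrow> real \<Rightarrow> real \<Rightarrow> real" where
  "Aroot l r \<alpha> \<beta> \<delta> Q0 =
     (THE A. 0 < A \<and> A < AM l r \<alpha> \<beta> \<and> G2 l r \<alpha> \<beta> Q0 A \<delta> = 0)"

definition is_Qstar :: "real \<Rightarrow> real \<Rightarrow> real \<Rightarrow> real \<Rightarrow> real \<Rightarrow> real \<Rightarrow> bool" where
  "is_Qstar l r \<alpha> \<beta> \<delta> q =
     (if \<delta> > 0 then
        q < 0 \<and> (\<forall>Q>q. sgn (deriv (Aroot l r \<alpha> \<beta> \<delta>) Q) = sgn (l - r))
              \<and> (\<forall>Q<q. sgn (deriv (Aroot l r \<alpha> \<beta> \<delta>) Q) = - sgn (l - r))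
      else
        q > 0 \<and> (\<forall>Q<q. sgn (deriv (Aroot l r \<alpha> \<beta> \<delta>) Q) = - sgn (l - r))
              \<and> (\<forall>Q>q. sgn (deriv (Aroot l r \<alpha> \<beta> \<delta>) Q) = sgn (l - r)))"

end

theory Submission
  imports Defs
begin

(* On its domain the equation splits as G2 = Phi(A) - Phi(B(A)) - A + l, where
   Phi(Q, x) = d Q ln(sqrt(Q^2 + x^2) + d Q) - sqrt(Q^2 + x^2) (d = delta) is decreasing in x and
   B(A) = k (l - A) + r with k = (1 - beta) / alpha.  So G2 has slope at most -1 in A: it has
   exactly one zero A(Q), lying between l and the fixed point of B, and
   |A(Q) - l| <= |Phi(Q, l) - Phi(Q, r)| = O(1 / |Q|).
   An implicit-function argument makes A differentiable, with A' of the sign of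
   h(Q) = Phi_Q(Q, A) - Phi_Q(Q, B(A)).  By the mean value theorem h = Phi_Qx(Q, xi) (A - B), and
   d Phi_Qx(Q, x) has the sign of d^2 sqrt(Q^2 + x^2) + d Q, which increases with x.  Hence
   d (l - r) h > 0 where d Q >= 0 and d (l - r) h < 0 where d Q is very negative, so h vanishes
   somewhere; and Euler's relation for Phi_Q shows that h crosses each of its zeros in the
   direction of l - r.  Thus h has a single zero q, A' changes sign only there, and A(q) is the
   extreme value of A. *)

section \<open>Mean values, implicit derivatives and transversal zeros\<close>

lemma real_mvt_open_segment:
  fixes f f' :: "real \<Rightarrow> real"
  assumes "a \<noteq> b" and "\<And>x. x \<in> closed_segment a b \<Longrightarrow> (f has_real_derivative f' x) (at x)"
  shows "\<exists>\<xi>\<in>open_segment a b. f b - f a = f' \<xi> * (b - a)"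
proof (cases "a < b")
  case True
  then obtain z where "a < z" "z < b" "f b - f a = (b - a) * f' z"
    using MVT2[of a b f f'] assms(2) by (auto simp: closed_segment_eq_real_ivl)
  with True show ?thesis by (intro bexI[of _ z]) (auto simp: open_segment_eq_real_ivl)
next
  case False
  with assms(1) have "b < a" by simp
  then obtain z where "b < z" "z < a" "f a - f b = (a - b) * f' z"
    using MVT2[of b a f f'] assms(2) by (auto simp: closed_segment_eq_real_ivl)
  with \<open>b < a\<close> show ?thesis by (intro bexI[of _ z]) (auto simp: open_segment_eq_real_ivl algebra_simps)
qed

lemma real_mvt_closed_segment:
  fixes f f' :: "real \<Rightarrow> real"
  assumes "\<And>x. x \<in> closed_segment a b \<Longrightarrow> (f has_real_derivative f' x) (at x)"
  shows "\<exists>\<xi>\<in>closed_segment a b. f b - f a = f' \<xi> * (b - a)"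
proof (cases "a = b")
  case False
  then show ?thesis using real_mvt_open_segment[OF _ assms] open_closed_segment by blast
qed auto

lemma mean_value_points_tendsto:
  fixes f :: "real \<Rightarrow> real" and G G_A :: "real \<Rightarrow> real \<Rightarrow> real"
  assumes f_cont: "isCont f Q"
    and G_A: "\<And>y a. a \<in> closed_segment (f Q) (f y) \<Longrightarrow> (G y has_real_derivative G_A y a) (at a)"
  obtains \<xi> where "\<And>y. G y (f y) - G y (f Q) = G_A y (\<xi> y) * (f y - f Q)" and "(\<xi> \<longlongrightarrow> f Q) (at Q)"
proof -
  have "\<forall>y. \<exists>\<xi>. \<xi> \<in> closed_segment (f Q) (f y) \<and> G y (f y) - G y (f Q) = G_A y \<xi> * (f y - f Q)"
    using real_mvt_closed_segment[OF G_A] by blast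
  then have "\<exists>\<xi>. \<forall>y. \<xi> y \<in> closed_segment (f Q) (f y)
      \<and> G y (f y) - G y (f Q) = G_A y (\<xi> y) * (f y - f Q)"
    by (rule choice)
  then obtain \<xi> where \<xi>: "\<And>y. \<xi> y \<in> closed_segment (f Q) (f y)"
    and mvt: "\<And>y. G y (f y) - G y (f Q) = G_A y (\<xi> y) * (f y - f Q)"
    by blast
  have "\<bar>\<xi> y - f Q\<bar> \<le> \<bar>f y - f Q\<bar>" for y
    using \<xi>[of y] by (auto simp: closed_segment_eq_real_ivl split: if_splits)
  then have "\<forall>\<^sub>F y in at Q. norm (\<xi> y - f Q) \<le> \<bar>f y - f Q\<bar>"
    by (intro always_eventually allI) simp
  moreover have "((\<lambda>y. \<bar>f y - f Q\<bar>) \<longlongrightarrow> 0) (at Q)"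
    using f_cont by (intro tendsto_rabs_zero) (simp add: isCont_def LIM_zero)
  ultimately have "((\<lambda>y. \<xi> y - f Q) \<longlongrightarrow> 0) (at Q)"
    by (rule Lim_null_comparison)
  then have "(\<xi> \<longlongrightarrow> f Q) (at Q)" by (simp add: LIM_zero_iff)
  then show thesis by (rule that[OF mvt])
qed

lemma implicit_has_real_derivative:
  fixes f :: "real \<Rightarrow> real" and G G_A :: "real \<Rightarrow> real \<Rightarrow> real"
  assumes f_cont: "isCont f Q"
    and root: "\<And>y. G y (f y) = 0"
    and G_Q: "((\<lambda>y. G y (f Q)) has_real_derivative D) (at Q)"
    and G_A: "\<And>y a. a \<in> closed_segment (f Q) (f y) \<Longrightarrow> (G y has_real_derivative G_A y a) (at a)"
    and G_A_cont: "isCont (\<lambda>(y, a). G_A y a) (Q, f Q)"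
    and G_A_nonzero: "G_A Q (f Q) \<noteq> 0"
  shows "(f has_real_derivative - D / G_A Q (f Q)) (at Q)"
proof -
  obtain \<xi> where mvt: "\<And>y. G y (f y) - G y (f Q) = G_A y (\<xi> y) * (f y - f Q)"
    and "(\<xi> \<longlongrightarrow> f Q) (at Q)"
    using mean_value_points_tendsto[where f = f and G = G and G_A = G_A, OF f_cont G_A] by blast
  then have "((\<lambda>y. (y, \<xi> y)) \<longlongrightarrow> (Q, f Q)) (at Q)"
    by (intro tendsto_Pair tendsto_ident_at)
  then have slope: "((\<lambda>y. G_A y (\<xi> y)) \<longlongrightarrow> G_A Q (f Q)) (at Q)"
    using isCont_tendsto_compose[OF G_A_cont, of "\<lambda>y. (y, \<xi> y)"] by simp
  have "((\<lambda>y. - ((G y (f Q) - G Q (f Q)) / (y - Q)) / G_A y (\<xi> y)) \<longlongrightarrow> - D / G_A Q (f Q)) (at Q)"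
    using G_Q slope G_A_nonzero
    by (intro tendsto_divide tendsto_minus) (simp_all add: has_field_derivative_iff)
  moreover have "\<forall>\<^sub>F y in at Q. - ((G y (f Q) - G Q (f Q)) / (y - Q)) / G_A y (\<xi> y) = (f y - f Q) / (y - Q)"
    using tendsto_imp_eventually_ne[OF slope G_A_nonzero]
  proof eventually_elim
    case (elim y)
    then have "f y - f Q = - G y (f Q) / G_A y (\<xi> y)"
      using mvt[of y] root[of y] by (simp add: eq_divide_eq)
    then show ?case using root[of Q] by simp
  qed
  ultimately show ?thesis
    unfolding has_field_derivative_iff by (rule Lim_transform_eventually)
qed

lemma pos_right_of_transversal_zero:
  fixes g :: "real \<Rightarrow> real"
  assumes "(g has_real_derivative D) (at z)" "0 < D" "g z = 0" "z < b"
  obtains c where "z < c" "c < b" "0 < g c"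
proof -
  obtain e where "0 < e" and e: "\<And>t. 0 < t \<Longrightarrow> t < e \<Longrightarrow> g z < g (z + t)"
    using DERIV_pos_inc_right[OF assms(1,2)] by blast
  define t where "t = min e (b - z) / 2"
  have "0 < t" "t < e" "t < b - z" using \<open>0 < e\<close> assms(4) unfolding t_def by auto
  then show thesis using that[of "z + t"] e[of t] assms(3) by auto
qed

lemma neg_left_of_transversal_zero:
  fixes g :: "real \<Rightarrow> real"
  assumes "(g has_real_derivative D) (at z)" "0 < D" "g z = 0" "a < z"
  obtains c where "a < c" "c < z" "g c < 0"
proof -
  obtain e where "0 < e" and e: "\<And>t. 0 < t \<Longrightarrow> t < e \<Longrightarrow> g (z - t) < g z"
    using DERIV_pos_inc_left[OF assms(1,2)] by blast
  define t where "t = min e (z - a) / 2"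
  have "0 < t" "t < e" "t < z - a" using \<open>0 < e\<close> assms(4) unfolding t_def by auto
  then show thesis using that[of "z - t"] e[of t] assms(3) by auto
qed

lemma transversal_zeros_unique:
  fixes g :: "real \<Rightarrow> real"
  assumes cont: "\<And>x. isCont g x"
    and transversal: "\<And>z. g z = 0 \<Longrightarrow> \<exists>D>0. (g has_real_derivative D) (at z)"
    and "g a = 0" "g b = 0"
  shows "a = b"
proof (rule ccontr)
  assume "a \<noteq> b"
  define a' b' where "a' = min a b" and "b' = max a b"
  have "a' < b'" "g a' = 0" "g b' = 0"
    using \<open>a \<noteq> b\<close> assms(3,4) unfolding a'_def b'_def by (auto simp: min_def max_def)
  obtain D where "0 < D" "(g has_real_derivative D) (at a')" using transversal \<open>g a' = 0\<close> by blast
  then obtain c where "a' < c" "c < b'" "0 < g c"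
    using pos_right_of_transversal_zero \<open>g a' = 0\<close> \<open>a' < b'\<close> by blast
  define Z where "Z = {c..b'} \<inter> g -` {0}"
  have "b' \<in> Z" using \<open>c < b'\<close> \<open>g b' = 0\<close> unfolding Z_def by auto
  have "closed Z" unfolding Z_def
    by (intro closed_Int closed_vimage closed_atLeastAtMost) (auto intro: continuous_at_imp_continuous_on cont)
  have "bdd_below Z" unfolding Z_def by auto
  define p where "p = Inf Z"
  have "p \<in> Z" unfolding p_def using closed_contains_Inf \<open>b' \<in> Z\<close> \<open>closed Z\<close> \<open>bdd_below Z\<close> by blast
  then have "c < p" "g p = 0" using \<open>0 < g c\<close> unfolding Z_def by (auto simp: order.order_iff_strict)
  have no_zero: "g x \<noteq> 0" if "c \<le> x" "x < p" for x
  proof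
    assume "g x = 0"
    moreover have "p \<le> b'" unfolding p_def using cInf_lower \<open>b' \<in> Z\<close> \<open>bdd_below Z\<close> by blast
    ultimately have "x \<in> Z" using that unfolding Z_def by auto
    then have "p \<le> x" unfolding p_def using cInf_lower \<open>bdd_below Z\<close> by blast
    with \<open>x < p\<close> show False by simp
  qed
  obtain D' where "0 < D'" "(g has_real_derivative D') (at p)" using transversal \<open>g p = 0\<close> by blast
  then obtain t where "c < t" "t < p" "g t < 0"
    using neg_left_of_transversal_zero \<open>g p = 0\<close> \<open>c < p\<close> by blast
  then obtain s where "c \<le> s" "s \<le> t" "g s = 0"
    using IVT2[of g t 0 c] \<open>0 < g c\<close> cont by (auto intro: less_imp_le)
  then show False using no_zero \<open>t < p\<close> by auto
qed

lemma transversal_zero_sign: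
  fixes g :: "real \<Rightarrow> real"
  assumes cont: "\<And>x. isCont g x"
    and transversal: "\<And>z. g z = 0 \<Longrightarrow> \<exists>D>0. (g has_real_derivative D) (at z)"
    and "g q = 0"
  shows "q < x \<Longrightarrow> 0 < g x" and "x < q \<Longrightarrow> g x < 0"
proof -
  obtain D where D: "0 < D" "(g has_real_derivative D) (at q)" using transversal \<open>g q = 0\<close> by blast
  have unique: "z = q" if "g z = 0" for z
    using transversal_zeros_unique[OF cont transversal that \<open>g q = 0\<close>] .
  show "0 < g x" if "q < x"
  proof (rule ccontr)
    assume "\<not> 0 < g x"
    obtain c where "q < c" "c < x" "0 < g c"
      using pos_right_of_transversal_zero[OF D(2,1) \<open>g q = 0\<close> \<open>q < x\<close>] .
    then obtain z where "c \<le> z" "z \<le> x" "g z = 0"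
      using IVT2[of g x 0 c] cont \<open>\<not> 0 < g x\<close> by auto
    then show False using unique \<open>q < c\<close> by fastforce
  qed
  show "g x < 0" if "x < q"
  proof (rule ccontr)
    assume "\<not> g x < 0"
    obtain c where "x < c" "c < q" "g c < 0"
      using neg_left_of_transversal_zero[OF D(2,1) \<open>g q = 0\<close> \<open>x < q\<close>] .
    then obtain z where "x \<le> z" "z \<le> c" "g z = 0"
      using IVT2[of g c 0 x] cont \<open>\<not> g x < 0\<close> by auto
    then show False using unique \<open>c < q\<close> by fastforce
  qed
qed
lemma le_at_derivative_sign_change:
  fixes f f' :: "real \<Rightarrow> real"
  assumes "\<And>x. (f has_real_derivative f' x) (at x)"
    and "\<And>x. x < q \<Longrightarrow> 0 \<le> f' x" and "\<And>x. q < x \<Longrightarrow> f' x \<le> 0"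
  shows "f x \<le> f q"
proof (cases x q rule: linorder_cases)
  case less
  then obtain z where "z < q" "f q - f x = (q - x) * f' z" using MVT2[OF less assms(1)] by blast
  moreover have "0 \<le> (q - x) * f' z" using less assms(2)[OF \<open>z < q\<close>] by simp
  ultimately show ?thesis by simp
next
  case greater
  then obtain z where "q < z" "f x - f q = (x - q) * f' z" using MVT2[OF greater assms(1)] by blast
  moreover have "(x - q) * f' z \<le> 0" using greater assms(3)[OF \<open>q < z\<close>] by (simp add: mult_nonneg_nonpos)
  ultimately show ?thesis by simp
qed simp

lemma sgn_eq_if_mult_pos: "0 < a * b \<Longrightarrow> sgn a = sgn (b :: real)"
  by (auto simp: zero_less_mult_iff)

lemma sgn_eq_minus_if_mult_neg: "a * b < 0 \<Longrightarrow> sgn a = - sgn (b :: real)"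
  by (auto simp: mult_less_0_iff)

section \<open>The function Phi\<close>

lemma Sa_pos: "x \<noteq> 0 \<Longrightarrow> 0 < Sa Q x"
  unfolding Sa_def by (simp add: add_nonneg_pos)

lemma abs_less_Sa: "x \<noteq> 0 \<Longrightarrow> \<bar>Q\<bar> < Sa Q x"
  unfolding Sa_def by (metis abs_ge_zero add.right_neutral add_strict_left_mono real_sqrt_abs
      real_sqrt_less_mono zero_less_power2)

lemma Sa_add_pos:
  assumes "\<bar>d\<bar> < 1" "x \<noteq> 0"
  shows "0 < Sa Q x + d * Q"
proof -
  have "\<bar>d * Q\<bar> \<le> \<bar>Q\<bar>" using assms(1) by (simp add: abs_mult mult_left_le_one_le)
  then show ?thesis using abs_less_Sa[OF assms(2), of Q] by linarith
qed

lemma Sa_sq: "(Sa Q x)\<^sup>2 = Q\<^sup>2 + x\<^sup>2"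
  unfolding Sa_def by simp

lemma Sa_strict_mono: "0 \<le> a \<Longrightarrow> a < b \<Longrightarrow> Sa Q a < Sa Q b"
  unfolding Sa_def by (simp add: power_strict_mono)

lemma Sa_has_real_derivative:
  assumes "(q has_real_derivative q') (at t)" "(x has_real_derivative x') (at t)" "x t \<noteq> 0"
  shows "((\<lambda>t. Sa (q t) (x t)) has_real_derivative (q t * q' + x t * x') / Sa (q t) (x t)) (at t)"
proof -
  have pos: "0 < (q t)\<^sup>2 + (x t)\<^sup>2" using assms(3) by (simp add: add_nonneg_pos)
  have "((\<lambda>t. (q t)\<^sup>2 + (x t)\<^sup>2) has_real_derivative 2 * q t * q' + 2 * x t * x') (at t)"
    by (auto intro!: derivative_eq_intros assms(1,2))
  from DERIV_chain2[OF DERIV_real_sqrt[OF pos] this]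
  have "((\<lambda>t. Sa (q t) (x t)) has_real_derivative
      inverse (Sa (q t) (x t)) / 2 * (2 * q t * q' + 2 * x t * x')) (at t)"
    unfolding Sa_def .
  then show ?thesis
    by (rule DERIV_cong) (simp add: divide_simps)
qed

(* Phi_Q is the partial derivative of Phi in Q; Phi_Qx and Phi_QQ are those of Phi_Q in x and
   in Q. *)
definition Phi :: "real \<Rightarrow> real \<Rightarrow> real \<Rightarrow> real" where
  "Phi d Q x = d * Q * ln (Sa Q x + d * Q) - Sa Q x"

definition Phi_Q :: "real \<Rightarrow> real \<Rightarrow> real \<Rightarrow> real" where
  "Phi_Q d Q x = d * ln (Sa Q x + d * Q) - (1 - d\<^sup>2) * Q / (Sa Q x + d * Q)"

definition Phi_Qx :: "real \<Rightarrow> real \<Rightarrow> real \<Rightarrow> real" where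
  "Phi_Qx d Q x = x * (d * Sa Q x + Q) / (Sa Q x * (Sa Q x + d * Q)\<^sup>2)"

definition Phi_QQ :: "real \<Rightarrow> real \<Rightarrow> real \<Rightarrow> real" where
  "Phi_QQ d Q x = (d * (Q + d * Sa Q x) * (Sa Q x + d * Q) - (1 - d\<^sup>2) * x\<^sup>2)
     / (Sa Q x * (Sa Q x + d * Q)\<^sup>2)"

lemma ln_Sa_add_has_real_derivative:
  assumes "\<bar>d\<bar> < 1" "x t \<noteq> 0"
    and q: "(q has_real_derivative q') (at t)" and x: "(x has_real_derivative x') (at t)"
  shows "((\<lambda>t. ln (Sa (q t) (x t) + d * q t)) has_real_derivative
    ((q t * q' + x t * x') / Sa (q t) (x t) + d * q') / (Sa (q t) (x t) + d * q t)) (at t)"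
proof -
  have "((\<lambda>t. Sa (q t) (x t) + d * q t) has_real_derivative
      (q t * q' + x t * x') / Sa (q t) (x t) + d * q') (at t)"
    by (intro DERIV_add DERIV_cmult Sa_has_real_derivative q x assms(2))
  from DERIV_chain2[OF DERIV_ln_divide[OF Sa_add_pos[OF assms(1,2)]] this] show ?thesis
    by simp
qed

lemma Phi_has_real_derivative:
  assumes "\<bar>d\<bar> < 1" "x t \<noteq> 0"
    and q: "(q has_real_derivative q') (at t)" and x: "(x has_real_derivative x') (at t)"
  shows "((\<lambda>t. Phi d (q t) (x t)) has_real_derivative
    Phi_Q d (q t) (x t) * q' - x t / (Sa (q t) (x t) + d * q t) * x') (at t)"
proof -
  define S where "S = Sa (q t) (x t)"
  have "S \<noteq> 0" "S + d * q t \<noteq> 0"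
    using Sa_pos[OF assms(2), of "q t"] Sa_add_pos[OF assms(1,2), of "q t"] unfolding S_def by auto
  have "((\<lambda>t. Phi d (q t) (x t)) has_real_derivative
      d * q' * ln (S + d * q t) + ((q t * q' + x t * x') / S + d * q') / (S + d * q t) * (d * q t)
      - (q t * q' + x t * x') / S) (at t)"
    unfolding Phi_def S_def
    by (intro DERIV_diff DERIV_mult DERIV_cmult q ln_Sa_add_has_real_derivative Sa_has_real_derivative
        assms x)
  then show ?thesis
    by (rule DERIV_cong) (unfold Phi_Q_def S_def[symmetric],
        use \<open>S \<noteq> 0\<close> \<open>S + d * q t \<noteq> 0\<close> in \<open>simp add: divide_simps\<close>,
        simp add: algebra_simps power2_eq_square)
qed

lemma Phi_Q_has_real_derivative:
  assumes "\<bar>d\<bar> < 1" "x t \<noteq> 0"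
    and q: "(q has_real_derivative q') (at t)" and x: "(x has_real_derivative x') (at t)"
  shows "((\<lambda>t. Phi_Q d (q t) (x t)) has_real_derivative
    Phi_QQ d (q t) (x t) * q' + Phi_Qx d (q t) (x t) * x') (at t)"
proof -
  define S where "S = Sa (q t) (x t)"
  have "S \<noteq> 0" "S + d * q t \<noteq> 0"
    using Sa_pos[OF assms(2), of "q t"] Sa_add_pos[OF assms(1,2), of "q t"] unfolding S_def by auto
  have "S\<^sup>2 = (q t)\<^sup>2 + (x t)\<^sup>2" unfolding S_def by (rule Sa_sq)
  have "((\<lambda>t. Phi_Q d (q t) (x t)) has_real_derivative
      d * (((q t * q' + x t * x') / S + d * q') / (S + d * q t))
      - ((1 - d\<^sup>2) * q' * (S + d * q t) - (1 - d\<^sup>2) * q t * ((q t * q' + x t * x') / S + d * q'))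
        / ((S + d * q t) * (S + d * q t))) (at t)"
    unfolding Phi_Q_def S_def
    by (intro DERIV_diff DERIV_cmult DERIV_divide DERIV_add q ln_Sa_add_has_real_derivative
        Sa_has_real_derivative assms x Sa_add_pos[OF assms(1,2), THEN less_imp_neq, symmetric])
  then show ?thesis
    by (rule DERIV_cong) (unfold Phi_QQ_def Phi_Qx_def S_def[symmetric],
        use \<open>S \<noteq> 0\<close> \<open>S + d * q t \<noteq> 0\<close> in \<open>simp add: divide_simps\<close>,
        use \<open>S\<^sup>2 = (q t)\<^sup>2 + (x t)\<^sup>2\<close> in algebra)
qed

lemma Phi_has_real_derivative_x:
  "\<bar>d\<bar> < 1 \<Longrightarrow> x \<noteq> 0 \<Longrightarrow> (Phi d Q has_real_derivative - x / (Sa Q x + d * Q)) (at x)"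
  by (rule DERIV_cong[OF Phi_has_real_derivative[OF _ _ DERIV_const DERIV_ident]]) simp_all

lemma Phi_has_real_derivative_Q:
  "\<bar>d\<bar> < 1 \<Longrightarrow> x \<noteq> 0 \<Longrightarrow> ((\<lambda>Q. Phi d Q x) has_real_derivative Phi_Q d Q x) (at Q)"
  by (rule DERIV_cong[OF Phi_has_real_derivative[OF _ _ DERIV_ident DERIV_const]]) simp_all

lemma Phi_Q_has_real_derivative_x:
  "\<bar>d\<bar> < 1 \<Longrightarrow> x \<noteq> 0 \<Longrightarrow> (Phi_Q d Q has_real_derivative Phi_Qx d Q x) (at x)"
  by (rule DERIV_cong[OF Phi_Q_has_real_derivative[OF _ _ DERIV_const DERIV_ident]]) simp_all

(* Phi_Q d (t * Q) (t * x) = Phi_Q d Q x + d * ln t; this is its derivative at t = 1. *)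
lemma Phi_Q_euler:
  assumes "\<bar>d\<bar> < 1" "x \<noteq> 0"
  shows "x * Phi_Qx d Q x + Q * Phi_QQ d Q x = d"
proof -
  have "Sa Q x \<noteq> 0" "Sa Q x + d * Q \<noteq> 0"
    using Sa_pos[OF assms(2), of Q] Sa_add_pos[OF assms, of Q] by auto
  then show ?thesis
    by (simp add: Phi_QQ_def Phi_Qx_def divide_simps, use Sa_sq[of Q x] in algebra)
qed

lemma sgn_Phi_Qx:
  assumes "\<bar>d\<bar> < 1" "0 < x"
  shows "sgn (d * Phi_Qx d Q x) = sgn (d\<^sup>2 * Sa Q x + d * Q)"
proof -
  have "0 < Sa Q x" "0 < Sa Q x + d * Q" using Sa_pos Sa_add_pos assms by auto
  define c where "c = x / (Sa Q x * (Sa Q x + d * Q)\<^sup>2)"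
  have "0 < c" unfolding c_def using assms(2) \<open>0 < Sa Q x\<close> \<open>0 < Sa Q x + d * Q\<close> by simp
  moreover have "d * Phi_Qx d Q x = c * (d\<^sup>2 * Sa Q x + d * Q)"
    unfolding Phi_Qx_def c_def by (simp add: power2_eq_square algebra_simps)
  ultimately show ?thesis by (simp add: sgn_mult)
qed

lemma sgn_Phi_Qx_balanced:
  assumes "\<bar>d\<bar> < 1" "d \<noteq> 0" "0 < \<xi>" "d\<^sup>2 * Sa Q \<xi> + d * Q = 0" "0 < x"
  shows "sgn (d * (x * Phi_Qx d Q x)) = sgn (x - \<xi>)"
proof -
  have "sgn (d * (x * Phi_Qx d Q x)) = sgn x * sgn (d * Phi_Qx d Q x)"
    by (simp add: sgn_mult mult.left_commute)
  also have "sgn (d * Phi_Qx d Q x) = sgn (d\<^sup>2 * Sa Q x + d * Q)" by (rule sgn_Phi_Qx[OF assms(1,5)])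
  also have "d\<^sup>2 * Sa Q x + d * Q = d\<^sup>2 * (Sa Q x - Sa Q \<xi>)" using assms(4) by (simp add: algebra_simps)
  also have "sgn (d\<^sup>2 * (Sa Q x - Sa Q \<xi>)) = sgn (x - \<xi>)"
  proof -
    have "(sgn d)\<^sup>2 = 1" using assms(2) by (simp add: sgn_if)
    then show ?thesis
      using Sa_strict_mono[of x \<xi> Q] Sa_strict_mono[of \<xi> x Q] assms(3,5)
      by (cases x \<xi> rule: linorder_cases) (simp_all add: sgn_mult sgn_pos sgn_neg)
  qed
  finally show ?thesis using assms(5) by simp
qed

lemma Phi_antimono:
  assumes "\<bar>d\<bar> < 1" "0 < a" "a \<le> b"
  shows "Phi d Q b \<le> Phi d Q a"
proof (rule DERIV_nonpos_imp_nonincreasing[OF assms(3)])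
  fix x assume "a \<le> x" "x \<le> b"
  with assms have "0 < x" "0 < Sa Q x + d * Q" using Sa_add_pos by auto
  then show "\<exists>y. (Phi d Q has_real_derivative y) (at x) \<and> y \<le> 0"
    using Phi_has_real_derivative_x[OF assms(1), of x Q] by (intro exI[of _ "- x / (Sa Q x + d * Q)"]) auto
qed

lemma Phi_diff_bound:
  assumes "\<bar>d\<bar> < 1" "Q \<noteq> 0" "0 < a" "0 < b"
  shows "\<bar>Phi d Q a - Phi d Q b\<bar> \<le> max a b / ((1 - \<bar>d\<bar>) * \<bar>Q\<bar>) * \<bar>a - b\<bar>"
proof -
  have "x \<noteq> 0" if "x \<in> closed_segment b a" for x
    using that assms(3,4) by (auto simp: closed_segment_eq_real_ivl split: if_splits)
  then have "(Phi d Q has_real_derivative - x / (Sa Q x + d * Q)) (at x)"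
    if "x \<in> closed_segment b a" for x
    using Phi_has_real_derivative_x[OF assms(1)] that by blast
  from real_mvt_closed_segment[OF this] obtain \<xi> where \<xi>: "\<xi> \<in> closed_segment b a"
    and mvt: "Phi d Q a - Phi d Q b = - \<xi> / (Sa Q \<xi> + d * Q) * (a - b)"
    by blast
  have "0 < \<xi>" "\<xi> \<le> max a b"
    using \<xi> assms(3,4) by (auto simp: closed_segment_eq_real_ivl split: if_splits)
  have "\<bar>d * Q\<bar> \<le> \<bar>d\<bar> * \<bar>Q\<bar>" by (simp add: abs_mult)
  then have den: "(1 - \<bar>d\<bar>) * \<bar>Q\<bar> \<le> Sa Q \<xi> + d * Q"
    using abs_less_Sa[of \<xi> Q] \<open>0 < \<xi>\<close> by (auto simp: algebra_simps abs_le_iff)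
  have "0 < (1 - \<bar>d\<bar>) * \<bar>Q\<bar>" using assms(1,2) by simp
  have "0 < Sa Q \<xi> + d * Q" using Sa_add_pos[OF assms(1)] \<open>0 < \<xi>\<close> by simp
  then have "\<bar>Phi d Q a - Phi d Q b\<bar> = \<xi> / (Sa Q \<xi> + d * Q) * \<bar>a - b\<bar>"
    unfolding mvt using \<open>0 < \<xi>\<close> by (simp add: abs_mult abs_minus_commute)
  also have "\<dots> \<le> max a b / ((1 - \<bar>d\<bar>) * \<bar>Q\<bar>) * \<bar>a - b\<bar>"
    using den \<open>0 < \<xi>\<close> \<open>\<xi> \<le> max a b\<close> \<open>0 < (1 - \<bar>d\<bar>) * \<bar>Q\<bar>\<close>
    by (intro mult_right_mono frac_le) auto
  finally show ?thesis .
qed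

section \<open>The reduced zero-current equation\<close>

(* k stands for (1 - beta) / alpha, so that B is Bq, A_max is AM and root is Aroot;
   A_fix is the fixed point of B. *)
locale zero_current_pnp =
  fixes l r k d :: real
  assumes l_pos: "0 < l" and r_pos: "0 < r" and k_pos: "0 < k" and d_bound: "\<bar>d\<bar> < 1"
begin

definition A_max :: real where "A_max = l + r / k"

definition B :: "real \<Rightarrow> real" where "B A = k * (l - A) + r"

definition A_fix :: real where "A_fix = (k * l + r) / (1 + k)"

definition G :: "real \<Rightarrow> real \<Rightarrow> real" where
  "G Q A = Phi d Q A - Phi d Q (B A) - A + l"

definition G_A :: "real \<Rightarrow> real \<Rightarrow> real" where
  "G_A Q A = - A / (Sa Q A + d * Q) - k * B A / (Sa Q (B A) + d * Q) - 1"

definition G_Q :: "real \<Rightarrow> real \<Rightarrow> real" where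
  "G_Q Q A = Phi_Q d Q A - Phi_Q d Q (B A)"

lemma l_less_A_max: "l < A_max"
  unfolding A_max_def using r_pos k_pos by simp

lemma B_pos: "A < A_max \<Longrightarrow> 0 < B A"
  unfolding A_max_def B_def using k_pos by (simp add: field_simps)

lemma B_less: "0 < A \<Longrightarrow> B A < k * l + r"
  unfolding B_def using k_pos by (simp add: algebra_simps)

lemma B_has_real_derivative: "(B has_real_derivative - k) (at A)"
  unfolding B_def[abs_def]
  by (rule DERIV_cong[OF DERIV_add[OF DERIV_cmult[OF DERIV_diff[OF DERIV_const DERIV_ident]]
        DERIV_const]]) simp

lemma B_A_fix: "B A_fix = A_fix" and A_fix_pos: "0 < A_fix"
  and A_fix_less_A_max: "A_fix < A_max" and A_fix_minus_l: "A_fix - l = (r - l) / (1 + k)"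
proof -
  show "B A_fix = A_fix" "A_fix - l = (r - l) / (1 + k)"
    unfolding B_def A_fix_def using k_pos by (simp_all add: field_simps)
  show "0 < A_fix"
    unfolding A_fix_def using k_pos l_pos r_pos by (intro divide_pos_pos add_pos_pos mult_pos_pos) auto
  have "0 < k * l + r" using k_pos l_pos r_pos by (intro add_pos_pos mult_pos_pos)
  then have "k * (k * l + r) < (1 + k) * (k * l + r)" by (simp add: distrib_right)
  then show "A_fix < A_max" unfolding A_fix_def A_max_def using k_pos by (simp add: field_simps)
qed

lemma G_has_real_derivative_A:
  assumes "0 < A" "A < A_max"
  shows "(G Q has_real_derivative G_A Q A) (at A)"
proof -
  have "A \<noteq> 0" "B A \<noteq> 0" using assms B_pos[OF assms(2)] by auto
  have "(G Q has_real_derivative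
      - A / (Sa Q A + d * Q) - - B A / (Sa Q (B A) + d * Q) * - k - 1 + 0) (at A)"
    unfolding G_def[abs_def]
    by (intro DERIV_add DERIV_diff DERIV_ident DERIV_const Phi_has_real_derivative_x d_bound \<open>A \<noteq> 0\<close>
        DERIV_chain2[OF Phi_has_real_derivative_x B_has_real_derivative] \<open>B A \<noteq> 0\<close>)
  then show ?thesis by (rule DERIV_cong) (simp add: G_A_def)
qed

lemma G_has_real_derivative_Q:
  assumes "0 < A" "A < A_max"
  shows "((\<lambda>Q. G Q A) has_real_derivative G_Q Q A) (at Q)"
proof -
  have "A \<noteq> 0" "B A \<noteq> 0" using assms B_pos[OF assms(2)] by auto
  then have "((\<lambda>Q. G Q A) has_real_derivative Phi_Q d Q A - Phi_Q d Q (B A) - 0 + 0) (at Q)"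
    unfolding G_def by (intro DERIV_add DERIV_diff DERIV_const Phi_has_real_derivative_Q d_bound)
  then show ?thesis by (simp add: G_Q_def)
qed

lemma G_A_le:
  assumes "0 < A" "A < A_max"
  shows "G_A Q A \<le> -1"
proof -
  have "0 < B A" using B_pos[OF assms(2)] .
  then have "0 \<le> A / (Sa Q A + d * Q)" "0 \<le> k * B A / (Sa Q (B A) + d * Q)"
    using assms(1) k_pos Sa_add_pos[OF d_bound, of A Q] Sa_add_pos[OF d_bound, of "B A" Q] by simp_all
  then show ?thesis unfolding G_A_def by simp
qed

lemma G_plus_id_antimono:
  assumes "0 < a" "a \<le> b" "b < A_max"
  shows "G Q b + b \<le> G Q a + a"
proof (rule DERIV_nonpos_imp_nonincreasing[OF assms(2)])
  fix x assume "a \<le> x" "x \<le> b"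
  then have x: "0 < x" "x < A_max" using assms by auto
  then show "\<exists>y. ((\<lambda>x. G Q x + x) has_real_derivative y) (at x) \<and> y \<le> 0"
    using DERIV_add[OF G_has_real_derivative_A[OF x] DERIV_ident] G_A_le[OF x, of Q]
    by (intro exI[of _ "G_A Q x + 1"]) auto
qed

lemma G_at_A_fix: "G Q A_fix = l - A_fix"
  unfolding G_def B_A_fix by simp

lemma G_at_l: "G Q l = Phi d Q l - Phi d Q r"
  unfolding G_def B_def by simp

lemma segment_l_A_fix_in_domain: "x \<in> closed_segment l A_fix \<Longrightarrow> 0 < x \<and> x < A_max"
  using l_pos l_less_A_max A_fix_pos A_fix_less_A_max
  by (auto simp: closed_segment_eq_real_ivl split: if_splits)

lemma G_zero_exists: "\<exists>A\<in>closed_segment l A_fix. G Q A = 0"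
proof -
  have cont: "isCont (G Q) x" if "x \<in> closed_segment l A_fix" for x
    using segment_l_A_fix_in_domain[OF that] G_has_real_derivative_A DERIV_isCont by blast
  show ?thesis
  proof (cases "l \<le> r")
    case True
    then have "0 \<le> (r - l) / (1 + k)" using k_pos by simp
    then have "l \<le> A_fix" using A_fix_minus_l by simp
    moreover have "0 \<le> G Q l" using Phi_antimono[OF d_bound l_pos True] unfolding G_at_l by simp
    ultimately have "G Q A_fix \<le> 0" "l \<le> A_fix" "0 \<le> G Q l" unfolding G_at_A_fix by simp_all
    then show ?thesis using IVT2[of "G Q" A_fix 0 l] cont
      by (auto simp: closed_segment_eq_real_ivl)
  next
    case False
    then have "(r - l) / (1 + k) < 0" using k_pos by (simp add: divide_neg_pos)
    then have "A_fix < l" using A_fix_minus_l by simp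
    moreover have "G Q l \<le> 0" using Phi_antimono[OF d_bound r_pos] False unfolding G_at_l by simp
    ultimately have "A_fix < l" "G Q l \<le> 0" "0 < G Q A_fix" unfolding G_at_A_fix by simp_all
    then show ?thesis using IVT2[of "G Q" l 0 A_fix] cont
      by (fastforce simp: closed_segment_eq_real_ivl)
  qed
qed

lemma G_zero_unique:
  assumes "0 < a" "a < A_max" "G Q a = 0" "0 < b" "b < A_max" "G Q b = 0"
  shows "a = b"
  using G_plus_id_antimono[of a b Q] G_plus_id_antimono[of b a Q] assms by linarith

definition root :: "real \<Rightarrow> real" where
  "root Q = (THE A. 0 < A \<and> A < A_max \<and> G Q A = 0)"

lemma root_pos: "0 < root Q" and root_less_A_max: "root Q < A_max"
  and G_root: "G Q (root Q) = 0" and root_in_segment: "root Q \<in> closed_segment l A_fix"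
proof -
  obtain A where A: "A \<in> closed_segment l A_fix" "G Q A = 0" using G_zero_exists by blast
  then have "root Q = A" unfolding root_def
    using segment_l_A_fix_in_domain G_zero_unique by (intro the_equality) blast+
  then show "0 < root Q" "root Q < A_max" "G Q (root Q) = 0" "root Q \<in> closed_segment l A_fix"
    using A segment_l_A_fix_in_domain by auto
qed

lemma root_eqI: "0 < A \<Longrightarrow> A < A_max \<Longrightarrow> G Q A = 0 \<Longrightarrow> root Q = A"
  using G_zero_unique root_pos root_less_A_max G_root by blast

lemma ex1_root: "\<exists>!A. 0 < A \<and> A < A_max \<and> G Q A = 0"
  using root_pos root_less_A_max G_root root_eqI by blast

lemma root_l_eq_r: "l = r \<Longrightarrow> root Q = l"
  using root_eqI[OF l_pos l_less_A_max] G_at_l by simp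

lemma A_fix_less_iff: "l < A_fix \<longleftrightarrow> l < r" "A_fix < l \<longleftrightarrow> r < l"
proof -
  have "0 < 1 + k" using k_pos by simp
  moreover have "A_fix = l + (r - l) / (1 + k)" using A_fix_minus_l by simp
  ultimately show "l < A_fix \<longleftrightarrow> l < r" "A_fix < l \<longleftrightarrow> r < l"
    by (simp_all add: zero_less_divide_iff divide_less_0_iff)
qed

lemma root_between:
  shows "l < r \<Longrightarrow> l \<le> root Q \<and> root Q < A_fix" and "r < l \<Longrightarrow> A_fix < root Q \<and> root Q \<le> l"
proof -
  have "root Q \<noteq> A_fix" if "l \<noteq> r"
    using G_root[of Q] G_at_A_fix A_fix_less_iff that by fastforce
  then show "l < r \<Longrightarrow> l \<le> root Q \<and> root Q < A_fix" "r < l \<Longrightarrow> A_fix < root Q \<and> root Q \<le> l"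
    using root_in_segment[of Q] A_fix_less_iff by (auto simp: closed_segment_eq_real_ivl split: if_splits)
qed

lemma sgn_root_minus_B: "sgn (root Q - B (root Q)) = sgn (l - r)"
proof -
  have "root Q - B (root Q) = (1 + k) * (root Q - A_fix)"
    unfolding B_def A_fix_def using k_pos by (simp add: field_simps)
  moreover have "0 < 1 + k" using k_pos by simp
  ultimately show ?thesis
    using root_between[of Q] root_l_eq_r[of Q] A_fix_minus_l
    by (cases l r rule: linorder_cases) (auto simp: sgn_mult)
qed

lemma dist_root_le:
  assumes "0 < a" "a < A_max"
  shows "\<bar>root Q - a\<bar> \<le> \<bar>G Q a\<bar>"
proof (cases "a \<le> root Q")
  case True
  then have "G Q (root Q) + root Q \<le> G Q a + a"
    using G_plus_id_antimono[of a "root Q" Q] assms(1) root_less_A_max[of Q] by simp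
  then show ?thesis using True G_root[of Q] by simp
next
  case False
  then have "G Q a + a \<le> G Q (root Q) + root Q"
    using G_plus_id_antimono[of "root Q" a Q] root_pos[of Q] assms(2) by simp
  then show ?thesis using False G_root[of Q] by simp
qed

lemma isCont_root: "isCont root Q"
proof -
  have "\<forall>\<^sub>F y in at Q. norm (root y - root Q) \<le> \<bar>G y (root Q)\<bar>"
    using dist_root_le[OF root_pos root_less_A_max] by (intro always_eventually allI) simp
  moreover have "isCont (\<lambda>y. G y (root Q)) Q"
    using G_has_real_derivative_Q[OF root_pos root_less_A_max] by (rule DERIV_isCont)
  then have "((\<lambda>y. \<bar>G y (root Q)\<bar>) \<longlongrightarrow> 0) (at Q)"
    using G_root[of Q] by (intro tendsto_rabs_zero) (simp add: isCont_def)
  ultimately have "((\<lambda>y. root y - root Q) \<longlongrightarrow> 0) (at Q)"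
    by (rule Lim_null_comparison)
  then show ?thesis unfolding isCont_def by (simp add: LIM_zero_iff)
qed

lemma tendsto_root_at_infinity: "(root \<longlongrightarrow> l) at_infinity"
proof -
  define C where "C = max l r / (1 - \<bar>d\<bar>) * \<bar>l - r\<bar>"
  have bound: "norm (root Q - l) \<le> C / \<bar>Q\<bar>" if "Q \<noteq> 0" for Q
  proof -
    have "norm (root Q - l) \<le> \<bar>Phi d Q l - Phi d Q r\<bar>"
      using dist_root_le[OF l_pos l_less_A_max] G_at_l by simp
    also have "\<dots> \<le> C / \<bar>Q\<bar>"
      using Phi_diff_bound[OF d_bound that l_pos r_pos] unfolding C_def by simp
    finally show ?thesis .
  qed
  have "filterlim (\<lambda>Q::real. \<bar>Q\<bar>) at_infinity at_infinity"
    unfolding filterlim_at_infinity_conv_norm_at_top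
    using filterlim_norm_at_top[where 'a=real] by (simp add: real_norm_def[abs_def])
  then have "((\<lambda>Q. C / \<bar>Q\<bar>) \<longlongrightarrow> 0) at_infinity"
    by (rule tendsto_divide_0[OF tendsto_const])
  with eventually_mono[OF eventually_not_equal_at_infinity bound] have "((\<lambda>Q. root Q - l) \<longlongrightarrow> 0) at_infinity"
    by (rule Lim_null_comparison)
  then show ?thesis by (simp add: LIM_zero_iff)
qed

definition root_deriv :: "real \<Rightarrow> real" where
  "root_deriv Q = - G_Q Q (root Q) / G_A Q (root Q)"

lemma root_has_real_derivative: "(root has_real_derivative root_deriv Q) (at Q)"
  unfolding root_deriv_def
proof (rule implicit_has_real_derivative[where G = G and G_A = G_A])
  show "isCont root Q" by (rule isCont_root)
  show "G y (root y) = 0" for y by (rule G_root)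
  show "((\<lambda>y. G y (root Q)) has_real_derivative G_Q Q (root Q)) (at Q)"
    by (rule G_has_real_derivative_Q[OF root_pos root_less_A_max])
  show "(G y has_real_derivative G_A y a) (at a)" if "a \<in> closed_segment (root Q) (root y)" for y a
  proof -
    have "0 < a" "a < A_max"
      using that root_pos[of Q] root_less_A_max[of Q] root_pos[of y] root_less_A_max[of y]
      by (auto simp: closed_segment_eq_real_ivl split: if_splits)
    then show ?thesis by (rule G_has_real_derivative_A)
  qed
  have "Sa Q (root Q) + d * Q \<noteq> 0" "Sa Q (B (root Q)) + d * Q \<noteq> 0"
    using Sa_add_pos[OF d_bound] root_pos B_pos[OF root_less_A_max] by (metis less_irrefl)+
  then show "isCont (\<lambda>(y, a). G_A y a) (Q, root Q)"
    unfolding G_A_def B_def Sa_def case_prod_unfold by (intro continuous_intros) auto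
  show "G_A Q (root Q) \<noteq> 0" using G_A_le[OF root_pos[of Q] root_less_A_max[of Q], of Q] by simp
qed

lemma deriv_root: "deriv root Q = root_deriv Q"
  by (rule DERIV_imp_deriv[OF root_has_real_derivative])

definition G_Q_root :: "real \<Rightarrow> real" where "G_Q_root Q = G_Q Q (root Q)"

lemma sgn_root_deriv: "sgn (root_deriv Q) = sgn (G_Q_root Q)"
proof -
  have "0 < - 1 / G_A Q (root Q)" using G_A_le[OF root_pos[of Q] root_less_A_max[of Q], of Q] by simp
  moreover have "root_deriv Q = G_Q_root Q * (- 1 / G_A Q (root Q))"
    unfolding root_deriv_def G_Q_root_def by simp
  ultimately show ?thesis by (simp add: sgn_mult)
qed

lemma G_Q_root_has_real_derivative:
  "(G_Q_root has_real_derivative Phi_QQ d Q (root Q) - Phi_QQ d Q (B (root Q))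
     + (Phi_Qx d Q (root Q) + k * Phi_Qx d Q (B (root Q))) * root_deriv Q) (at Q)"
proof -
  have "root Q \<noteq> 0" "B (root Q) \<noteq> 0" using root_pos B_pos[OF root_less_A_max] by (metis less_irrefl)+
  then have "(G_Q_root has_real_derivative
      (Phi_QQ d Q (root Q) * 1 + Phi_Qx d Q (root Q) * root_deriv Q)
      - (Phi_QQ d Q (B (root Q)) * 1 + Phi_Qx d Q (B (root Q)) * (- k * root_deriv Q))) (at Q)"
    unfolding G_Q_root_def G_Q_def[abs_def]
    by (intro DERIV_diff Phi_Q_has_real_derivative d_bound DERIV_ident root_has_real_derivative
        DERIV_chain2[OF B_has_real_derivative root_has_real_derivative])
  then show ?thesis by (rule DERIV_cong) (simp add: algebra_simps)
qed

lemma isCont_G_Q_root: "isCont G_Q_root Q"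
  using G_Q_root_has_real_derivative by (rule DERIV_isCont)

lemma G_Q_root_has_real_derivative_at_zero:
  assumes "G_Q_root Q = 0"
  shows "(G_Q_root has_real_derivative Phi_QQ d Q (root Q) - Phi_QQ d Q (B (root Q))) (at Q)"
proof -
  have "root_deriv Q = 0" using assms unfolding root_deriv_def G_Q_root_def by simp
  then show ?thesis using G_Q_root_has_real_derivative[of Q] by simp
qed

lemma G_Q_root_sign_mean_value:
  assumes "l \<noteq> r"
  obtains \<xi> where "\<xi> \<in> open_segment (root Q) (B (root Q))"
    and "sgn (d * G_Q_root Q * (l - r)) = sgn (d\<^sup>2 * Sa Q \<xi> + d * Q)"
proof -
  let ?A = "root Q" and ?B = "B (root Q)"
  have "sgn (?A - ?B) = sgn (l - r)" by (rule sgn_root_minus_B)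
  then have "?B \<noteq> ?A" using assms by (auto simp: sgn_0_0)
  have pos: "0 < x" if "x \<in> closed_segment ?B ?A" for x
    using that root_pos[of Q] B_pos[OF root_less_A_max[of Q]]
    by (auto simp: closed_segment_eq_real_ivl split: if_splits)
  then have "(Phi_Q d Q has_real_derivative Phi_Qx d Q x) (at x)" if "x \<in> closed_segment ?B ?A" for x
    using Phi_Q_has_real_derivative_x[OF d_bound] that by (metis less_irrefl)
  from real_mvt_open_segment[OF \<open>?B \<noteq> ?A\<close> this] obtain \<xi> where \<xi>: "\<xi> \<in> open_segment ?B ?A"
    and mvt: "Phi_Q d Q ?A - Phi_Q d Q ?B = Phi_Qx d Q \<xi> * (?A - ?B)"
    by blast
  have "0 < \<xi>" using pos \<xi> open_closed_segment by blast
  have "d * G_Q_root Q * (l - r) = (d * Phi_Qx d Q \<xi>) * ((?A - ?B) * (l - r))"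
    unfolding G_Q_root_def G_Q_def mvt by (simp add: algebra_simps)
  then have "sgn (d * G_Q_root Q * (l - r)) = sgn (d * Phi_Qx d Q \<xi>) * sgn ((?A - ?B) * (l - r))"
    by (simp only: sgn_mult)
  also have "sgn ((?A - ?B) * (l - r)) = 1"
  proof -
    have "sgn ((?A - ?B) * (l - r)) = sgn (l - r) * sgn (l - r)"
      by (simp only: sgn_mult \<open>sgn (?A - ?B) = sgn (l - r)\<close>)
    then show ?thesis using assms by (cases "l < r") (simp_all add: sgn_if)
  qed
  also have "sgn (d * Phi_Qx d Q \<xi>) = sgn (d\<^sup>2 * Sa Q \<xi> + d * Q)"
    by (rule sgn_Phi_Qx[OF d_bound \<open>0 < \<xi>\<close>])
  finally show ?thesis using that \<xi> by (simp add: open_segment_commute)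
qed

lemma G_Q_root_pos_if_dQ_nonneg:
  assumes "d \<noteq> 0" "l \<noteq> r" "0 \<le> d * Q"
  shows "0 < d * G_Q_root Q * (l - r)"
proof -
  obtain \<xi> where \<xi>: "\<xi> \<in> open_segment (root Q) (B (root Q))"
    and sgn: "sgn (d * G_Q_root Q * (l - r)) = sgn (d\<^sup>2 * Sa Q \<xi> + d * Q)"
    using G_Q_root_sign_mean_value[OF assms(2)] .
  have "0 < \<xi>"
    using \<xi> root_pos[of Q] B_pos[OF root_less_A_max[of Q]] by (auto simp: open_segment_eq_real_ivl split: if_splits)
  moreover have "0 < d\<^sup>2" using assms(1) by simp
  ultimately have "0 < d\<^sup>2 * Sa Q \<xi> + d * Q"
    using assms(3) Sa_pos[of \<xi> Q] by (intro add_pos_nonneg mult_pos_pos) auto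
  with sgn show ?thesis by (metis sgn_greater)
qed

lemma G_Q_root_neg_if_far:
  assumes "d \<noteq> 0" "l \<noteq> r" "d * Q < 0" and far: "d\<^sup>2 * (Q\<^sup>2 + (max A_max (k * l + r))\<^sup>2) < Q\<^sup>2"
  shows "d * G_Q_root Q * (l - r) < 0"
proof -
  obtain \<xi> where \<xi>: "\<xi> \<in> open_segment (root Q) (B (root Q))"
    and sgn: "sgn (d * G_Q_root Q * (l - r)) = sgn (d\<^sup>2 * Sa Q \<xi> + d * Q)"
    using G_Q_root_sign_mean_value[OF assms(2)] .
  have "0 < \<xi>" "\<xi> < max A_max (k * l + r)"
    using \<xi> root_pos[of Q] root_less_A_max[of Q] B_pos[OF root_less_A_max[of Q]] B_less[OF root_pos[of Q]]
    by (auto simp: open_segment_eq_real_ivl split: if_splits)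
  then have "\<xi>\<^sup>2 < (max A_max (k * l + r))\<^sup>2" by (intro power_strict_mono) auto
  then have "d\<^sup>2 * (Sa Q \<xi>)\<^sup>2 \<le> d\<^sup>2 * (Q\<^sup>2 + (max A_max (k * l + r))\<^sup>2)"
    unfolding Sa_sq by (intro mult_left_mono) auto
  with far have "(\<bar>d\<bar> * Sa Q \<xi>)\<^sup>2 < \<bar>Q\<bar>\<^sup>2" by (simp add: power_mult_distrib)
  then have "\<bar>d\<bar> * Sa Q \<xi> < \<bar>Q\<bar>" by (rule power_less_imp_less_base) simp
  moreover have "d\<^sup>2 * Sa Q \<xi> + d * Q = \<bar>d\<bar> * (\<bar>d\<bar> * Sa Q \<xi> - \<bar>Q\<bar>)"
    using assms(3) abs_of_neg[of "d * Q"] by (simp add: abs_mult algebra_simps power2_eq_square)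
  moreover have "0 < \<bar>d\<bar>" using assms(1) by simp
  ultimately have "d\<^sup>2 * Sa Q \<xi> + d * Q < 0" by (simp add: mult_pos_neg)
  with sgn show ?thesis by (metis sgn_less)
qed

lemma G_Q_root_zero_crossing:
  assumes "d \<noteq> 0" "l \<noteq> r" "G_Q_root Q = 0"
  shows "d * Q < 0" and "0 < (Phi_QQ d Q (root Q) - Phi_QQ d Q (B (root Q))) * (l - r)"
proof -
  let ?A = "root Q" and ?B = "B (root Q)"
  obtain \<xi> where \<xi>: "\<xi> \<in> open_segment ?A ?B"
    and "sgn (d * G_Q_root Q * (l - r)) = sgn (d\<^sup>2 * Sa Q \<xi> + d * Q)"
    using G_Q_root_sign_mean_value[OF assms(2)] .
  then have m: "d\<^sup>2 * Sa Q \<xi> + d * Q = 0" using assms(3) by (simp add: sgn_0_0)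
  have "0 < ?A" "0 < ?B" using root_pos[of Q] B_pos[OF root_less_A_max[of Q]] .
  then have "0 < \<xi>" using \<xi> by (auto simp: open_segment_eq_real_ivl split: if_splits)
  have "0 < d\<^sup>2" using assms(1) by simp
  then have "0 < d\<^sup>2 * Sa Q \<xi>" using Sa_pos[of \<xi> Q] \<open>0 < \<xi>\<close> by simp
  then show dQ: "d * Q < 0" using m by linarith
  note sgn_x = sgn_Phi_Qx_balanced[OF d_bound assms(1) \<open>0 < \<xi>\<close> m]
  have "?A * Phi_Qx d Q ?A + Q * Phi_QQ d Q ?A = ?B * Phi_Qx d Q ?B + Q * Phi_QQ d Q ?B"
    using Phi_Q_euler[OF d_bound, of ?A Q] Phi_Q_euler[OF d_bound, of ?B Q] \<open>0 < ?A\<close> \<open>0 < ?B\<close>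
    by simp
  then have "d * (?A * Phi_Qx d Q ?A + Q * Phi_QQ d Q ?A) = d * (?B * Phi_Qx d Q ?B + Q * Phi_QQ d Q ?B)"
    by simp
  then have euler:
    "d * Q * (Phi_QQ d Q ?A - Phi_QQ d Q ?B) = d * (?B * Phi_Qx d Q ?B) - d * (?A * Phi_Qx d Q ?A)"
    by (simp add: algebra_simps)
  have "sgn (?A - \<xi>) = sgn (l - r)" "sgn (?B - \<xi>) = - sgn (l - r)"
    using \<xi> sgn_root_minus_B[of Q] by (auto simp: open_segment_eq_real_ivl sgn_pos sgn_neg split: if_splits)
  then have sA: "sgn (d * (?A * Phi_Qx d Q ?A)) = sgn (l - r)"
    and sB: "sgn (d * (?B * Phi_Qx d Q ?B)) = - sgn (l - r)"
    using sgn_x[OF \<open>0 < ?A\<close>] sgn_x[OF \<open>0 < ?B\<close>] by simp_all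
  consider "l < r" | "r < l" using assms(2) by linarith
  then show "0 < (Phi_QQ d Q ?A - Phi_QQ d Q ?B) * (l - r)"
  proof cases
    case 1
    then have "d * (?A * Phi_Qx d Q ?A) < 0" "0 < d * (?B * Phi_Qx d Q ?B)"
      using sA sB by (simp_all add: sgn_1_neg sgn_1_pos)
    with euler have "0 < d * Q * (Phi_QQ d Q ?A - Phi_QQ d Q ?B)" by simp
    with dQ have "Phi_QQ d Q ?A - Phi_QQ d Q ?B < 0"
      using zero_less_mult_iff[of "d * Q" "Phi_QQ d Q ?A - Phi_QQ d Q ?B"] by linarith
    with 1 show ?thesis by (simp add: mult_neg_neg)
  next
    case 2
    then have "0 < d * (?A * Phi_Qx d Q ?A)" "d * (?B * Phi_Qx d Q ?B) < 0"
      using sA sB by (simp_all add: sgn_1_neg sgn_1_pos)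
    with euler have "d * Q * (Phi_QQ d Q ?A - Phi_QQ d Q ?B) < 0" by simp
    with dQ have "0 < Phi_QQ d Q ?A - Phi_QQ d Q ?B"
      using mult_less_0_iff[of "d * Q" "Phi_QQ d Q ?A - Phi_QQ d Q ?B"] by linarith
    with 2 show ?thesis by simp
  qed
qed

lemma G_Q_root_zero_exists:
  assumes "d \<noteq> 0" "l \<noteq> r"
  obtains q where "G_Q_root q = 0"
proof -
  define M where "M = max A_max (k * l + r)"
  define c where "c = 1 - d\<^sup>2"
  \<comment> \<open>chosen so that G_Q_root_neg_if_far applies\<close>
  define Q where "Q = - d * M / c"
  have "0 < M" unfolding M_def using l_pos l_less_A_max by (simp add: less_max_iff_disj)
  have "0 < d\<^sup>2" "0 < c" "c < 1"
    using assms(1) d_bound unfolding c_def by (simp_all add: abs_square_less_1)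
  have "d * Q = - (d\<^sup>2 * M / c)" unfolding Q_def by (simp add: power2_eq_square)
  then have "d * Q < 0" using \<open>0 < M\<close> \<open>0 < c\<close> \<open>0 < d\<^sup>2\<close> by simp
  have "d\<^sup>2 * M\<^sup>2 < d\<^sup>2 * M\<^sup>2 / c"
    using \<open>0 < M\<close> \<open>0 < d\<^sup>2\<close> \<open>0 < c\<close> \<open>c < 1\<close> by (simp add: less_divide_eq)
  also have "\<dots> = Q\<^sup>2 * c"
    unfolding Q_def using \<open>0 < c\<close> by (simp add: power2_eq_square field_simps)
  finally have far: "d\<^sup>2 * (Q\<^sup>2 + M\<^sup>2) < Q\<^sup>2" unfolding c_def by (simp add: algebra_simps)
  define g where "g x = d * G_Q_root x * (l - r)" for x
  have cont: "isCont g x" for x unfolding g_def by (intro continuous_intros isCont_G_Q_root)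
  have "0 < g 0" unfolding g_def using G_Q_root_pos_if_dQ_nonneg[OF assms] by simp
  moreover have "g Q < 0"
    unfolding g_def using G_Q_root_neg_if_far[OF assms \<open>d * Q < 0\<close>] far unfolding M_def by simp
  ultimately obtain z where "g z = 0"
  proof (cases "Q < 0")
    case True
    then show ?thesis using IVT[of g Q 0 0] \<open>0 < g 0\<close> \<open>g Q < 0\<close> cont that by auto
  next
    case False
    then have "0 < Q" using \<open>d * Q < 0\<close> by (cases "Q = 0") auto
    then show ?thesis using IVT2[of g Q 0 0] \<open>0 < g 0\<close> \<open>g Q < 0\<close> cont that by auto
  qed
  then show ?thesis using that assms unfolding g_def by simp
qed

lemma G_Q_root_sign_change:
  assumes "d \<noteq> 0" "l \<noteq> r"
  obtains q where "d * q < 0"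
    and "\<And>Q. q < Q \<Longrightarrow> 0 < G_Q_root Q * (l - r)" and "\<And>Q. Q < q \<Longrightarrow> G_Q_root Q * (l - r) < 0"
proof -
  obtain q where q: "G_Q_root q = 0" using G_Q_root_zero_exists[OF assms] .
  define g where "g Q = G_Q_root Q * (l - r)" for Q
  have "isCont g x" for x unfolding g_def by (intro continuous_intros isCont_G_Q_root)
  moreover have "\<exists>D>0. (g has_real_derivative D) (at z)" if "g z = 0" for z
  proof -
    have "G_Q_root z = 0" using that assms(2) unfolding g_def by simp
    then show ?thesis
      unfolding g_def using G_Q_root_zero_crossing(2)[OF assms] G_Q_root_has_real_derivative_at_zero
      by (blast intro: DERIV_cmult_right)
  qed
  moreover have "g q = 0" unfolding g_def using q by simp
  ultimately show ?thesis
    using that G_Q_root_zero_crossing(1)[OF assms q] transversal_zero_sign unfolding g_def by blast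
qed

lemma root_deriv_sign_change:
  assumes "d \<noteq> 0"
  obtains q where "if 0 < d then q < 0 else 0 < q"
    and "\<And>Q. q < Q \<Longrightarrow> sgn (deriv root Q) = sgn (l - r)"
    and "\<And>Q. Q < q \<Longrightarrow> sgn (deriv root Q) = - sgn (l - r)"
proof (cases "l = r")
  case True
  then have "G_Q_root Q = 0" for Q
    unfolding G_Q_root_def G_Q_def root_l_eq_r[OF True] B_def by simp
  then have "sgn (deriv root Q) = 0" for Q unfolding deriv_root sgn_root_deriv by simp
  then show ?thesis using that[of "- d"] assms True by auto
next
  case False
  then obtain q where "d * q < 0"
    and "\<And>Q. q < Q \<Longrightarrow> 0 < G_Q_root Q * (l - r)" "\<And>Q. Q < q \<Longrightarrow> G_Q_root Q * (l - r) < 0"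
    using G_Q_root_sign_change[OF assms] by blast
  moreover have "if 0 < d then q < 0 else 0 < q"
    using \<open>d * q < 0\<close> by (auto simp: mult_less_0_iff)
  ultimately show ?thesis
    using that sgn_eq_if_mult_pos sgn_eq_minus_if_mult_neg unfolding deriv_root sgn_root_deriv by metis
qed

lemma root_le_at_sign_change:
  assumes "\<And>Q. q < Q \<Longrightarrow> sgn (deriv root Q) = sgn (l - r)"
    and "\<And>Q. Q < q \<Longrightarrow> sgn (deriv root Q) = - sgn (l - r)"
  shows "l < r \<Longrightarrow> root Q \<le> root q" and "r < l \<Longrightarrow> root q \<le> root Q"
proof -
  have sgn: "sgn (root_deriv x) = sgn (l - r)" if "q < x" for x
    using assms(1) that unfolding deriv_root .
  have sgn': "sgn (root_deriv x) = - sgn (l - r)" if "x < q" for x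
    using assms(2) that unfolding deriv_root .
  show "root Q \<le> root q" if "l < r"
  proof (rule le_at_derivative_sign_change[OF root_has_real_derivative])
    have "sgn (l - r) = - 1" using \<open>l < r\<close> by simp
    then show "0 \<le> root_deriv x" if "x < q" for x
      using sgn'[OF that] by (simp add: sgn_1_pos less_imp_le)
    show "root_deriv x \<le> 0" if "q < x" for x
      using sgn[OF that] \<open>sgn (l - r) = - 1\<close> by (simp add: sgn_1_neg less_imp_le)
  qed
  show "root q \<le> root Q" if "r < l"
  proof -
    have "- root Q \<le> - root q"
    proof (rule le_at_derivative_sign_change[OF DERIV_minus[OF root_has_real_derivative]])
      have "sgn (l - r) = 1" using \<open>r < l\<close> by simp
      then show "0 \<le> - root_deriv x" if "x < q" for x
        using sgn'[OF that] by (simp add: sgn_1_neg less_imp_le)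
      show "- root_deriv x \<le> 0" if "q < x" for x
        using sgn[OF that] \<open>sgn (l - r) = 1\<close> by (simp add: sgn_1_pos less_imp_le)
    qed
    then show ?thesis by simp
  qed
qed

lemma G2_root_iff:
  assumes "0 < \<alpha>" "k = (1 - \<beta>) / \<alpha>"
  shows "(0 < A \<and> A < AM l r \<alpha> \<beta> \<and> G2 l r \<alpha> \<beta> Q A d = 0) \<longleftrightarrow> (0 < A \<and> A < A_max \<and> G Q A = 0)"
proof -
  have "1 - \<beta> \<noteq> 0" using k_pos assms by auto
  then have "AM l r \<alpha> \<beta> = A_max" unfolding AM_def A_max_def by (simp add: assms(2))
  moreover have "G2 l r \<alpha> \<beta> Q A d = G Q A" if "0 < A" "A < A_max"
  proof -
    have "Sb l r \<alpha> \<beta> Q A = Sa Q (B A)" unfolding Sb_def Sa_def Bq_def B_def by (simp add: assms(2))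
    moreover have "0 < Sa Q A + d * Q" "0 < Sa Q (B A) + d * Q"
      using Sa_add_pos[OF d_bound] that B_pos[OF that(2)] by (metis less_irrefl)+
    ultimately show ?thesis unfolding G2_def Nq_def G_def Phi_def by (simp add: ln_div algebra_simps)
  qed
  ultimately show ?thesis by auto
qed

end

theorem theorem3p8:
  fixes l r \<alpha> \<beta> D1 D2 \<delta> :: real
  assumes "l > 0" and "r > 0"
    and "0 < \<alpha>" and "\<alpha> < \<beta>" and "\<beta> < 1"
    and "D1 > 0" and "D2 > 0" and "D1 \<noteq> D2"
    and "\<delta> = (D2 - D1) / (D2 + D1)"
  shows "(\<forall>Q0. \<exists>!A. 0 < A \<and> A < AM l r \<alpha> \<beta> \<and> G2 l r \<alpha> \<beta> Q0 A \<delta> = 0)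
    \<and> (Aroot l r \<alpha> \<beta> \<delta> \<longlongrightarrow> l) at_top
    \<and> (Aroot l r \<alpha> \<beta> \<delta> \<longlongrightarrow> l) at_bot
    \<and> (\<forall>Q0. Aroot l r \<alpha> \<beta> \<delta> differentiable at Q0)
    \<and> (\<exists>q. is_Qstar l r \<alpha> \<beta> \<delta> q)
    \<and> (\<forall>q. is_Qstar l r \<alpha> \<beta> \<delta> q \<longrightarrow>
         (\<forall>Q0.
           (l < r \<longrightarrow> l \<le> Aroot l r \<alpha> \<beta> \<delta> Q0 \<and> Aroot l r \<alpha> \<beta> \<delta> Q0 \<le> Aroot l r \<alpha> \<beta> \<delta> q)
         \<and> (l > r \<longrightarrow> Aroot l r \<alpha> \<beta> \<delta> q \<le> Aroot l r \<alpha> \<beta> \<delta> Q0 \<and> Aroot l r \<alpha> \<beta> \<delta> Q0 \<le> l)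
         \<and> (l = r \<longrightarrow> Aroot l r \<alpha> \<beta> \<delta> Q0 = l \<and> l = r \<and> r = Aroot l r \<alpha> \<beta> \<delta> q)))"
proof -
  have "0 < D2 + D1" "\<bar>D2 - D1\<bar> < D2 + D1" using assms(6,7) by auto
  then have "\<bar>\<delta>\<bar> < 1" "\<delta> \<noteq> 0" unfolding assms(9) abs_divide using assms(8) by simp_all
  interpret zero_current_pnp l r "(1 - \<beta>) / \<alpha>" \<delta>
    using assms(1-5) \<open>\<bar>\<delta>\<bar> < 1\<close> by unfold_locales simp_all
  note iff = G2_root_iff[OF assms(3) refl]
  have Aroot: "Aroot l r \<alpha> \<beta> \<delta> = root" unfolding Aroot_def[abs_def] root_def[abs_def] iff ..
  have Qstar: "is_Qstar l r \<alpha> \<beta> \<delta> q \<longleftrightarrow> (if 0 < \<delta> then q < 0 else 0 < q)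
      \<and> (\<forall>Q>q. sgn (deriv root Q) = sgn (l - r)) \<and> (\<forall>Q<q. sgn (deriv root Q) = - sgn (l - r))" for q
    unfolding is_Qstar_def Aroot by auto
  obtain q where "if 0 < \<delta> then q < 0 else 0 < q"
    "\<And>Q. q < Q \<Longrightarrow> sgn (deriv root Q) = sgn (l - r)" "\<And>Q. Q < q \<Longrightarrow> sgn (deriv root Q) = - sgn (l - r)"
    using root_deriv_sign_change[OF \<open>\<delta> \<noteq> 0\<close>] by blast
  then have "\<exists>q. is_Qstar l r \<alpha> \<beta> \<delta> q" unfolding Qstar by blast
  moreover have "(l < r \<longrightarrow> l \<le> root Q \<and> root Q \<le> root q) \<and> (r < l \<longrightarrow> root q \<le> root Q \<and> root Q \<le> l)
      \<and> (l = r \<longrightarrow> root Q = l \<and> l = r \<and> r = root q)" if "is_Qstar l r \<alpha> \<beta> \<delta> q" for q Q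
    using that root_le_at_sign_change[of q Q] root_between[of Q] root_l_eq_r unfolding Qstar by auto
  moreover have "root differentiable at Q" for Q
    using root_has_real_derivative real_differentiable_def by blast
  ultimately show ?thesis
    unfolding Aroot iff
    using ex1_root tendsto_mono[OF at_top_le_at_infinity tendsto_root_at_infinity]
      tendsto_mono[OF at_bot_le_at_infinity tendsto_root_at_infinity] by blast
qed

end
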